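(* Let $a,b\in C\ell_{1,2}$. If $\mathrm{Cim}(a)\neq\mathrm{Cim}(b)$, $\mathrm{Cim}(a)\neq 0$, $\mathrm{Cim}(b)\neq 0$ and $P(\mathrm{Cim}(a))=P(\mathrm{Cim}(b))=0$, then at least one of the four elements $\mathrm{Cim}(a)e_t+e_t\,\mathrm{Cim}(b)$, $t=0,1,2,3$, is invertible.
   Context: $C\ell_{1,2}$ is the real Clifford algebra generated by $i_1,i_2,i_3$ with $i_1^2=1$, $i_2^2=i_3^2=-1$ and $i_ti_m=-i_mi_t$ for $t\neq m$, with real basis $e_0=1$, $e_1=i_1$, $e_2=i_2$, $e_3=i_1i_2$, $e_4=i_3$, $e_5=i_1i_3$, $e_6=i_2i_3$, $e_7=i_1i_2i_3$. For $a=\sum_{t=0}^7 a_te_t$: $\mathrm{Cim}(a)=a_1e_1+a_2e_2+a_3e_3+a_4e_4+a_5e_5+a_6e_6$; $N(a)=a_0^2-a_1^2+a_2^2-a_3^2+a_4^2-a_5^2+a_6^2-a_7^2$; $T(a)=a_0a_7+a_2a_5-a_1a_6-a_3a_4$; $P(a)=N(a)^2+4T(a)^2$. An element $c$ is invertible if there is $d$ with $cd=dc=1$; this holds iff $P(c)\neq 0$. *)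

theory Defs
  imports Complex_Main
begin

text \<open>Elements of the real Clifford algebra Cl_{1,2}, written in the real basis
e_0,...,e_7 (e_0 = 1, e_1 = i1, e_2 = i2, e_3 = i1 i2, e_4 = i3, e_5 = i1 i3,
e_6 = i2 i3, e_7 = i1 i2 i3). Index k encodes the generators as bits
(bit 0: i1, bit 1: i2, bit 2: i3).\<close>

datatype cl12 = CL real real real real real real real real

fun cf :: "cl12 \<Rightarrow> nat \<Rightarrow> real" where
  "cf (CL a0 a1 a2 a3 a4 a5 a6 a7) k =
     (if k = 0 then a0 else if k = 1 then a1 else if k = 2 then a2 else if k = 3 then a3
      else if k = 4 then a4 else if k = 5 then a5 else if k = 6 then a6
      else if k = 7 then a7 else 0)"

definition cl_of :: "(nat \<Rightarrow> real) \<Rightarrow> cl12" where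
  "cl_of f = CL (f 0) (f 1) (f 2) (f 3) (f 4) (f 5) (f 6) (f 7)"

text \<open>Squares of generators: i1^2 = 1, i2^2 = i3^2 = -1 (generator j has index j, 0-based).\<close>
definition gen_sq :: "nat \<Rightarrow> real" where
  "gen_sq j = (if j = 0 then 1 else -1)"

text \<open>Sign in e_s e_t = cl_sign s t * e_(s xor t): anticommute the generators of t past
the larger generators of s, then square common generators.\<close>
definition cl_sign :: "nat \<Rightarrow> nat \<Rightarrow> real" where
  "cl_sign s t =
     (-1) ^ (\<Sum>i<3. \<Sum>j<3. if bit s i \<and> bit t j \<and> j < i then 1 else 0)
     * (\<Prod>k<3. if bit s k \<and> bit t k then gen_sq k else 1)"

definition cl_mult :: "cl12 \<Rightarrow> cl12 \<Rightarrow> cl12" where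
  "cl_mult a b = cl_of (\<lambda>k. \<Sum>s<8. \<Sum>t<8.
       if xor s t = k then cl_sign s t * cf a s * cf b t else 0)"

definition cl_add :: "cl12 \<Rightarrow> cl12 \<Rightarrow> cl12" where
  "cl_add a b = cl_of (\<lambda>k. cf a k + cf b k)"

definition cl_zero :: cl12 where "cl_zero = CL 0 0 0 0 0 0 0 0"
definition cl_one :: cl12 where "cl_one = CL 1 0 0 0 0 0 0 0"

definition cl_basis :: "nat \<Rightarrow> cl12" where
  "cl_basis t = cl_of (\<lambda>k. if k = t then 1 else 0)"

definition Cim :: "cl12 \<Rightarrow> cl12" where
  "Cim a = CL 0 (cf a 1) (cf a 2) (cf a 3) (cf a 4) (cf a 5) (cf a 6) 0"

definition N :: "cl12 \<Rightarrow> real" where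
  "N a = (cf a 0)^2 - (cf a 1)^2 + (cf a 2)^2 - (cf a 3)^2 + (cf a 4)^2 - (cf a 5)^2
         + (cf a 6)^2 - (cf a 7)^2"

definition T :: "cl12 \<Rightarrow> real" where
  "T a = cf a 0 * cf a 7 + cf a 2 * cf a 5 - cf a 1 * cf a 6 - cf a 3 * cf a 4"

definition P :: "cl12 \<Rightarrow> real" where
  "P a = (N a)^2 + 4 * (T a)^2"

definition cl_invertible :: "cl12 \<Rightarrow> bool" where
  "cl_invertible c \<longleftrightarrow> (\<exists>d. cl_mult c d = cl_one \<and> cl_mult d c = cl_one)"

end

theory Submission
  imports Defs
begin

text \<open>The span of 1 and e_7 is central and e_7^2 = -1, so it is a copy of the complex numbers,
and over it Cl_{1,2} is the algebra of complexified quaternions with units e_2, e_4, e_6. The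
complex number N c + 2 T c i is the norm form c * conj c, the sum of the squares of the four
complex coordinates of c, so c is invertible whenever P c, the squared modulus of that number,
is nonzero. For x = Cim a and y = Cim b the norm forms of x e_t + e_t y (t = 0, 1, 2, 3) are,
up to sign, the norm forms of x and y plus twice signed sums of the coordinate products
x_k y_k. If x, y are isotropic and all four vanish, every product x_k y_k vanishes, i.e. x and
y have disjoint supports among the three imaginary coordinates. But a nonzero isotropic vector
of C^3 has at least two nonzero coordinates, so this is impossible.\<close>

lemma two_le_card_support_if_isotropic:
  fixes z :: "'a \<Rightarrow> 'b::idom"
  assumes "finite K" and "(\<Sum>k\<in>K. (z k)\<^sup>2) = 0" and "\<exists>k\<in>K. z k \<noteq> 0"
  shows "2 \<le> card {k\<in>K. z k \<noteq> 0}"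
proof (rule ccontr)
  define S where "S = {k\<in>K. z k \<noteq> 0}"
  assume "\<not> 2 \<le> card {k\<in>K. z k \<noteq> 0}"
  moreover have "card S \<noteq> 0" using assms by (auto simp: S_def)
  ultimately have "card S = 1" by (simp add: S_def)
  then obtain j where "S = {j}" by (rule card_1_singletonE)
  have "(\<Sum>k\<in>K. (z k)\<^sup>2) = (\<Sum>k\<in>S. (z k)\<^sup>2)"
    using assms(1) by (intro sum.mono_neutral_right) (auto simp: S_def)
  also have "\<dots> = (z j)\<^sup>2" using \<open>S = {j}\<close> by simp
  also have "\<dots> \<noteq> 0" using \<open>S = {j}\<close> by (auto simp: S_def)
  finally show False using assms(2) by simp
qed

lemma isotropic_disjoint_supports:
  fixes z w :: "'a \<Rightarrow> 'b::idom"
  assumes "finite K" and "card K \<le> 3"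
    and "(\<Sum>k\<in>K. (z k)\<^sup>2) = 0" and "(\<Sum>k\<in>K. (w k)\<^sup>2) = 0"
    and "\<forall>k\<in>K. z k * w k = 0"
  shows "(\<forall>k\<in>K. z k = 0) \<or> (\<forall>k\<in>K. w k = 0)"
proof (rule ccontr)
  assume "\<not> ?thesis"
  then have "2 \<le> card {k\<in>K. z k \<noteq> 0}" and "2 \<le> card {k\<in>K. w k \<noteq> 0}"
    using two_le_card_support_if_isotropic[OF assms(1)] assms(3,4) by auto
  moreover have "{k\<in>K. z k \<noteq> 0} \<inter> {k\<in>K. w k \<noteq> 0} = {}" using assms(5) by auto
  ultimately have "4 \<le> card ({k\<in>K. z k \<noteq> 0} \<union> {k\<in>K. w k \<noteq> 0})"
    using assms(1) by (simp add: card_Un_disjoint)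
  also have "\<dots> \<le> card K" using assms(1) by (intro card_mono) auto
  finally show False using assms(2) by simp
qed

lemma cl_mult_CL:
  "cl_mult (CL a0 a1 a2 a3 a4 a5 a6 a7) (CL b0 b1 b2 b3 b4 b5 b6 b7) =
    CL (a0*b0 + a1*b1 - a2*b2 + a3*b3 - a4*b4 + a5*b5 - a6*b6 - a7*b7)
       (a0*b1 + a1*b0 + a2*b3 - a3*b2 + a4*b5 - a5*b4 - a6*b7 - a7*b6)
       (a0*b2 + a1*b3 + a2*b0 - a3*b1 + a4*b6 - a5*b7 - a6*b4 - a7*b5)
       (a0*b3 + a1*b2 - a2*b1 + a3*b0 - a4*b7 + a5*b6 - a6*b5 - a7*b4)
       (a0*b4 + a1*b5 - a2*b6 + a3*b7 + a4*b0 - a5*b1 + a6*b2 + a7*b3)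
       (a0*b5 + a1*b4 + a2*b7 - a3*b6 - a4*b1 + a5*b0 + a6*b3 + a7*b2)
       (a0*b6 + a1*b7 + a2*b4 - a3*b5 - a4*b2 + a5*b3 + a6*b0 + a7*b1)
       (a0*b7 + a1*b6 - a2*b5 + a3*b4 + a4*b3 - a5*b2 + a6*b1 + a7*b0)"
proof -
  have "{..<8::nat} = {0,1,2,3,4,5,6,7}" and "{..<3::nat} = {0,1,2}" by auto
  then show ?thesis
    unfolding cl_mult_def cl_of_def cl_sign_def gen_sq_def by (simp add: bit_0 algebra_simps)
qed

lemma cl_add_CL:
  "cl_add (CL a0 a1 a2 a3 a4 a5 a6 a7) (CL b0 b1 b2 b3 b4 b5 b6 b7) =
    CL (a0+b0) (a1+b1) (a2+b2) (a3+b3) (a4+b4) (a5+b5) (a6+b6) (a7+b7)"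
  by (simp add: cl_add_def cl_of_def)

lemma cl_basis_CL:
  "cl_basis 0 = CL 1 0 0 0 0 0 0 0" "cl_basis 1 = CL 0 1 0 0 0 0 0 0"
  "cl_basis 2 = CL 0 0 1 0 0 0 0 0" "cl_basis 3 = CL 0 0 0 1 0 0 0 0"
  by (simp_all add: cl_basis_def cl_of_def)

lemma cl_mult_assoc: "cl_mult (cl_mult a b) c = cl_mult a (cl_mult b c)"
  by (cases a, cases b, cases c) (simp add: cl_mult_CL algebra_simps)

definition cl_of_complex :: "complex \<Rightarrow> cl12" where
  "cl_of_complex z = CL (Re z) 0 0 0 0 0 0 (Im z)"

lemma cl_of_complex_one: "cl_of_complex 1 = cl_one"
  by (simp add: cl_of_complex_def cl_one_def)

lemma cl_mult_of_complex: "cl_mult (cl_of_complex z) (cl_of_complex w) = cl_of_complex (z * w)"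
  by (simp add: cl_of_complex_def cl_mult_CL)

lemma cl_of_complex_commute: "cl_mult (cl_of_complex z) c = cl_mult c (cl_of_complex z)"
  by (cases c) (simp add: cl_of_complex_def cl_mult_CL)

definition cl_conj :: "cl12 \<Rightarrow> cl12" where
  "cl_conj a =
     CL (cf a 0) (- cf a 1) (- cf a 2) (- cf a 3) (- cf a 4) (- cf a 5) (- cf a 6) (cf a 7)"

definition cl_cnorm :: "cl12 \<Rightarrow> complex" where
  "cl_cnorm a = Complex (N a) (2 * T a)"

lemma cl_mult_conj_right: "cl_mult c (cl_conj c) = cl_of_complex (cl_cnorm c)"
  by (cases c) (simp add: cl_conj_def cl_of_complex_def cl_cnorm_def N_def T_def cl_mult_CL
      algebra_simps power2_eq_square)

lemma cl_mult_conj_left: "cl_mult (cl_conj c) c = cl_of_complex (cl_cnorm c)"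
  by (cases c) (simp add: cl_conj_def cl_of_complex_def cl_cnorm_def N_def T_def cl_mult_CL
      algebra_simps power2_eq_square)

lemma P_eq_cmod_cl_cnorm: "P a = (cmod (cl_cnorm a))\<^sup>2"
  by (simp add: P_def cl_cnorm_def cmod_power2 power_mult_distrib)

lemma P_eq_0_iff: "P c = 0 \<longleftrightarrow> cl_cnorm c = 0"
  by (simp add: P_eq_cmod_cl_cnorm)

lemma cl_invertible_if_P_nonzero:
  assumes "P c \<noteq> 0"
  shows "cl_invertible c"
proof -
  define z where "z = cl_cnorm c"
  define d where "d = cl_mult (cl_conj c) (cl_of_complex (inverse z))"
  have "z \<noteq> 0" using assms by (simp add: P_eq_0_iff z_def)
  then have unit: "cl_mult (cl_of_complex z) (cl_of_complex (inverse z)) = cl_one"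
    by (simp add: cl_mult_of_complex cl_of_complex_one)
  have "cl_mult c d = cl_one"
    using unit by (simp add: d_def z_def flip: cl_mult_assoc cl_mult_conj_right)
  moreover have "cl_mult d c = cl_one"
    using unit by (simp add: d_def z_def cl_mult_assoc cl_of_complex_commute
        flip: cl_mult_conj_left)
  ultimately show ?thesis unfolding cl_invertible_def by blast
qed

lemma cl_cnorm_eq_0_if_not_invertible: "\<not> cl_invertible c \<Longrightarrow> cl_cnorm c = 0"
  using cl_invertible_if_P_nonzero P_eq_0_iff by blast

text \<open>Coefficients of 1, e_6, e_2, e_4 over the centre: e_7 e_6 = -e_1, e_7 e_2 = e_5 and
e_7 e_4 = -e_3.\<close>

definition cl_ccoord :: "cl12 \<Rightarrow> nat \<Rightarrow> complex" where
  "cl_ccoord a k =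
     (if k = 0 then Complex (cf a 0) (cf a 7) else if k = 1 then Complex (cf a 6) (- cf a 1)
      else if k = 2 then Complex (cf a 2) (cf a 5) else if k = 3 then Complex (cf a 4) (- cf a 3)
      else 0)"

lemma cl_cnorm_Cim: "cl_cnorm (Cim a) = (\<Sum>k\<in>{1,2,3}. (cl_ccoord a k)\<^sup>2)"
  by (cases a) (simp add: Cim_def cl_cnorm_def cl_ccoord_def N_def T_def complex_eq_iff
      power2_eq_square)

lemma Cim_eq_cl_zero_iff: "Cim a = cl_zero \<longleftrightarrow> (\<forall>k\<in>{1,2,3}. cl_ccoord a k = 0)"
  by (cases a) (auto simp: Cim_def cl_ccoord_def cl_zero_def complex_eq_iff)

lemma cl_cnorm_Cim_mult_basis_add:
  fixes a b :: cl12
  defines "Q \<equiv> cl_cnorm (Cim a) + cl_cnorm (Cim b)"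
    and "p \<equiv> \<lambda>k. cl_ccoord a k * cl_ccoord b k"
  shows "cl_cnorm (cl_add (cl_mult (Cim a) (cl_basis 0)) (cl_mult (cl_basis 0) (Cim b)))
           = Q + 2 * (p 1 + p 2 + p 3)"
    and "cl_cnorm (cl_add (cl_mult (Cim a) (cl_basis 1)) (cl_mult (cl_basis 1) (Cim b)))
           = - Q - 2 * (p 1 - p 2 - p 3)"
    and "cl_cnorm (cl_add (cl_mult (Cim a) (cl_basis 2)) (cl_mult (cl_basis 2) (Cim b)))
           = Q + 2 * (p 2 - p 1 - p 3)"
    and "cl_cnorm (cl_add (cl_mult (Cim a) (cl_basis 3)) (cl_mult (cl_basis 3) (Cim b)))
           = - Q - 2 * (p 3 - p 1 - p 2)"
  unfolding Q_def p_def cl_basis_CL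
  by (cases a; cases b; simp add: Cim_def cl_mult_CL cl_add_CL cl_cnorm_def
      cl_ccoord_def N_def T_def complex_eq_iff power2_eq_square algebra_simps)+

lemma cl_ccoord_products_eq_0:
  assumes "cl_cnorm (Cim a) = 0" and "cl_cnorm (Cim b) = 0"
    and "\<forall>t\<in>{0,1,2,3::nat}.
           cl_cnorm (cl_add (cl_mult (Cim a) (cl_basis t)) (cl_mult (cl_basis t) (Cim b))) = 0"
  shows "\<forall>k\<in>{1,2,3}. cl_ccoord a k * cl_ccoord b k = 0"
proof -
  let ?S = "\<lambda>t. cl_cnorm (cl_add (cl_mult (Cim a) (cl_basis t)) (cl_mult (cl_basis t) (Cim b)))"
  define p where "p k = cl_ccoord a k * cl_ccoord b k" for k
  have "?S 0 = 0" "?S 1 = 0" "?S 2 = 0" "?S 3 = 0" using assms(3) by blast+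
  then have "0 = 2 * (p 1 + p 2 + p 3)" "0 = - (2 * (p 1 - p 2 - p 3))"
    "0 = 2 * (p 2 - p 1 - p 3)" "0 = - (2 * (p 3 - p 1 - p 2))"
    using cl_cnorm_Cim_mult_basis_add[of a b] unfolding assms(1,2) p_def
    by (simp_all only: add_0 minus_zero diff_0)
  then have "p 1 = 0" "p 2 = 0" "p 3 = 0" by algebra+
  then show ?thesis by (simp add: p_def)
qed

theorem lemma5p2:
  fixes a b :: cl12
  assumes "Cim a \<noteq> Cim b" and "Cim a \<noteq> cl_zero" and "Cim b \<noteq> cl_zero"
    and "P (Cim a) = 0" and "P (Cim b) = 0"
  shows "\<exists>t\<in>{0,1,2,3::nat}.
           cl_invertible (cl_add (cl_mult (Cim a) (cl_basis t)) (cl_mult (cl_basis t) (Cim b)))"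
proof (rule ccontr)
  assume "\<not> ?thesis"
  then have "\<forall>t\<in>{0,1,2,3::nat}.
      cl_cnorm (cl_add (cl_mult (Cim a) (cl_basis t)) (cl_mult (cl_basis t) (Cim b))) = 0"
    using cl_cnorm_eq_0_if_not_invertible by blast
  moreover have "cl_cnorm (Cim a) = 0" and "cl_cnorm (Cim b) = 0"
    using assms(4,5) by (simp_all add: P_eq_0_iff)
  ultimately have "(\<forall>k\<in>{1,2,3}. cl_ccoord a k = 0) \<or> (\<forall>k\<in>{1,2,3}. cl_ccoord b k = 0)"
    using cl_ccoord_products_eq_0
    by (intro isotropic_disjoint_supports) (simp_all add: cl_cnorm_Cim)
  then show False using assms(2,3) Cim_eq_cl_zero_iff by blast
qed

end
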